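(* Let $\Sigma$ be a real symmetric positive semidefinite $n\times n$ matrix which is irreducible. If $\Sigma\preceq_e 0$, then ${\operatorname{mr}}(\Sigma)=n-1$, where \[{\operatorname{mr}}(\Sigma)=\min\{\operatorname{rank}(\hat\Sigma)\mid \Sigma=\tilde\Sigma+\hat\Sigma,\ \hat\Sigma\text{ real symmetric positive semidefinite},\ \tilde\Sigma\text{ real diagonal}\}.\]
   Context: A square matrix is irreducible if it cannot be brought into block-diagonal form (with at least two diagonal blocks) by a simultaneous permutation of its rows and columns. For a real square matrix $M$, $M\preceq_e 0$ means that the off-diagonal entries of $M$ are all $\le 0$, or can be made so by changing the signs of selected rows and the corresponding columns (i.e. there is a diagonal matrix $P$ with diagonal entries $\pm1$ such that $PMP$ has all off-diagonal entries $\le 0$). In the definition of ${\operatorname{mr}}$ the diagonal matrix $\tilde\Sigma$ is not required to be positive semidefinite. *)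

theory Defs
  imports "HOL-Analysis.Analysis"
begin

definition symmetric_mat :: "real^'n^'n \<Rightarrow> bool" where
  "symmetric_mat M \<longleftrightarrow> transpose M = M"

definition psd_mat :: "real^'n^'n \<Rightarrow> bool" where
  "psd_mat M \<longleftrightarrow> symmetric_mat M \<and> (\<forall>x::real^'n. 0 \<le> x \<bullet> (M *v x))"

definition diagonal_mat :: "real^'n^'n \<Rightarrow> bool" where
  "diagonal_mat D \<longleftrightarrow> (\<forall>i j. i \<noteq> j \<longrightarrow> D $ i $ j = 0)"

text \<open>Irreducible: no simultaneous row/column permutation brings M into block-diagonal
 form with at least two blocks, i.e. there is no splitting of the index set into a nonempty
 proper subset I and its complement with all entries between I and its complement zero.\<close>
definition irreducible_mat :: "real^'n^'n \<Rightarrow> bool" where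
  "irreducible_mat M \<longleftrightarrow>
     \<not> (\<exists>I::'n set. I \<noteq> {} \<and> I \<noteq> UNIV \<and>
          (\<forall>i j. i \<in> I \<and> j \<notin> I \<longrightarrow> M $ i $ j = 0 \<and> M $ j $ i = 0))"

text \<open>M \<preceq>_e 0: there is a diagonal signature matrix P (entries \<plusminus>1 on the diagonal)
 such that P M P has all off-diagonal entries \<le> 0.\<close>
definition sign_nonpos_off_diag :: "real^'n^'n \<Rightarrow> bool" where
  "sign_nonpos_off_diag M \<longleftrightarrow>
     (\<exists>P::real^'n^'n. diagonal_mat P \<and> (\<forall>i. P $ i $ i = 1 \<or> P $ i $ i = -1) \<and>
        (\<forall>i j. i \<noteq> j \<longrightarrow> (P ** M ** P) $ i $ j \<le> 0))"

definition mr :: "real^'n^'n \<Rightarrow> nat" where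
  "mr S = (LEAST r. \<exists>D H. S = D + H \<and> psd_mat H \<and> diagonal_mat D \<and> r = rank H)"

end

theory Submission
  imports Defs
begin

text \<open>Writing S = D + H with D diagonal changes only the diagonal, so every admissible H is
again irreducible and has the sign pattern of S: p_i p_j H_ij \<le> 0 off the diagonal for a
signature p. If H x = 0, the vector y with y_i = p_i \<bar>x_i\<bar> has quadratic form at most that of x,
so H y = 0 by semidefiniteness; in a row i with x_i = 0 all terms of (H y)_i have the same sign,
hence vanish, and the zero set of x would split H. Thus nonzero kernel vectors have no zero
entry, the kernel is at most a line and rank H \<ge> n - 1. Conversely, subtracting the least
eigenvalue of S (the minimum of its quadratic form on the unit sphere) from the diagonal
leaves a singular positive semidefinite matrix.\<close>

definition signed_nonpos_off_diag :: "('n \<Rightarrow> real) \<Rightarrow> real^'n^'n \<Rightarrow> bool" where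
  "signed_nonpos_off_diag p M \<longleftrightarrow>
     (\<forall>i. p i = 1 \<or> p i = -1) \<and> (\<forall>i j. i \<noteq> j \<longrightarrow> p i * p j * M $ i $ j \<le> 0)"

lemma inner_matrix_vector_mult_eq_sum:
  "(x::real^'n) \<bullet> (A *v y) = (\<Sum>i\<in>UNIV. \<Sum>j\<in>UNIV. x$i * A$i$j * y$j)"
  by (simp add: inner_vec_def matrix_vector_mult_def sum_distrib_left mult.assoc)

lemma symmetric_mat_entry_swap: "symmetric_mat M \<Longrightarrow> M $ j $ i = M $ i $ j"
  unfolding symmetric_mat_def by (metis transpose_def vec_lambda_beta)

lemma symmetric_mat_inner_swap:
  assumes "symmetric_mat M"
  shows "(y::real^'n) \<bullet> (M *v x) = x \<bullet> (M *v y)"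
proof -
  have "y \<bullet> (M *v x) = (transpose M *v y) \<bullet> x"
    by (simp add: transpose_matrix_vector dot_lmul_matrix)
  also have "\<dots> = x \<bullet> (M *v y)" using assms by (simp add: symmetric_mat_def inner_commute)
  finally show ?thesis .
qed

lemma psd_mat_quadratic_form_eq_0_imp_kernel:
  assumes "psd_mat M" "(x::real^'n) \<bullet> (M *v x) = 0"
  shows "M *v x = 0"
proof -
  define y where "y = M *v x"
  define a where "a = y \<bullet> y"
  define b where "b = y \<bullet> (M *v y)"
  have sym: "symmetric_mat M" and nonneg: "\<And>z. 0 \<le> z \<bullet> (M *v z)"
    using assms(1) by (auto simp: psd_mat_def)
  have "b \<ge> 0" unfolding b_def by (rule nonneg)
  have along_line: "0 \<le> 2*c*a + c\<^sup>2*b" for c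
  proof -
    have "0 \<le> (x + c *\<^sub>R y) \<bullet> (M *v (x + c *\<^sub>R y))" by (rule nonneg)
    also have "\<dots> = x \<bullet> (M *v x) + c * (x \<bullet> (M *v y)) + c * (y \<bullet> (M *v x)) + c\<^sup>2 * b"
      by (simp add: matrix_vector_right_distrib matrix_vector_mult_scaleR inner_add_left
          inner_add_right b_def power2_eq_square algebra_simps)
    also have "\<dots> = 2*c*a + c\<^sup>2*b"
      using symmetric_mat_inner_swap[OF sym, of x y] assms(2) by (simp add: a_def y_def)
    finally show ?thesis .
  qed
  have "a = 0"
  proof (rule ccontr)
    assume "a \<noteq> 0"
    then have "a > 0" unfolding a_def by simp
    \<comment> \<open>c = -a/(b+1) makes the quadratic in c negative\<close>
    have "2*(-a/(b+1))*a + (-a/(b+1))\<^sup>2*b = a\<^sup>2 * (-b-2)/(b+1)\<^sup>2"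
      using \<open>b \<ge> 0\<close> by (simp add: divide_simps power2_eq_square) (simp add: algebra_simps)
    also have "\<dots> < 0" using \<open>a > 0\<close> \<open>b \<ge> 0\<close>
      by (intro divide_neg_pos mult_pos_neg) auto
    finally show False using along_line[of "-a/(b+1)"] by linarith
  qed
  then show ?thesis unfolding a_def y_def by simp
qed

lemma diagonal_mat_sandwich_entry:
  assumes "diagonal_mat P"
  shows "(P ** M ** P) $ i $ j = P$i$i * M$i$j * P$j$j"
proof -
  have "(P ** M) $ i $ k = P$i$i * M$i$k" for k
    using assms by (simp add: matrix_matrix_mult_def diagonal_mat_def sum.remove[of UNIV i])
  then show ?thesis
    using assms by (simp add: matrix_matrix_mult_def diagonal_mat_def sum.remove[of UNIV j])
qed

lemma sign_nonpos_off_diag_imp_signed: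
  assumes "sign_nonpos_off_diag M"
  obtains p where "signed_nonpos_off_diag p M"
proof -
  obtain P where P: "diagonal_mat P" "\<forall>i. P $ i $ i = 1 \<or> P $ i $ i = -1"
      "\<forall>i j. i \<noteq> j \<longrightarrow> (P ** M ** P) $ i $ j \<le> 0"
    using assms unfolding sign_nonpos_off_diag_def by auto
  have "P$i$i * P$j$j * M$i$j = (P ** M ** P) $ i $ j" for i j
    by (simp add: diagonal_mat_sandwich_entry[OF P(1)] algebra_simps)
  then have "signed_nonpos_off_diag (\<lambda>i. P $ i $ i) M"
    using P(2,3) by (simp add: signed_nonpos_off_diag_def)
  then show ?thesis by (rule that)
qed

lemma diagonal_mat_add_off_diag: "diagonal_mat D \<Longrightarrow> i \<noteq> j \<Longrightarrow> (D + H) $ i $ j = H $ i $ j"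
  by (simp add: diagonal_mat_def)

lemma signed_nonpos_off_diag_diagonal_add:
  "signed_nonpos_off_diag p (D + H) \<Longrightarrow> diagonal_mat D \<Longrightarrow> signed_nonpos_off_diag p H"
  by (simp add: signed_nonpos_off_diag_def diagonal_mat_def)

lemma irreducible_mat_diagonal_add:
  fixes D H :: "real^'n^'n"
  assumes "irreducible_mat (D + H)" "diagonal_mat D"
  shows "irreducible_mat H"
  unfolding irreducible_mat_def
proof
  assume "\<exists>I::'n set. I \<noteq> {} \<and> I \<noteq> UNIV \<and>
      (\<forall>i j. i \<in> I \<and> j \<notin> I \<longrightarrow> H $ i $ j = 0 \<and> H $ j $ i = 0)"
  then obtain I :: "'n set" where I: "I \<noteq> {}" "I \<noteq> UNIV"
      "\<forall>i j. i \<in> I \<and> j \<notin> I \<longrightarrow> H $ i $ j = 0 \<and> H $ j $ i = 0" by blast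
  have "(D + H) $ i $ j = 0 \<and> (D + H) $ j $ i = 0" if "i \<in> I" "j \<notin> I" for i j
  proof -
    have "i \<noteq> j" using that by auto
    then show ?thesis using I(3) that diagonal_mat_add_off_diag[OF assms(2)] by metis
  qed
  then show False using assms(1) I(1,2) unfolding irreducible_mat_def by blast
qed

lemma signed_abs_mult_le:
  fixes p q h a b :: real
  assumes "p = 1 \<or> p = -1" "q = 1 \<or> q = -1" "p * q * h \<le> 0"
  shows "p * \<bar>a\<bar> * h * (q * \<bar>b\<bar>) \<le> a * h * b"
proof -
  have pq: "p * q = 1 \<or> p * q = -1" using assms(1,2) by auto
  then have pq2: "(p * q) * (p * q) = 1" by auto
  have "p * \<bar>a\<bar> * h * (q * \<bar>b\<bar>) = (p*q*h) * \<bar>a * b\<bar>"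
    by (simp add: abs_mult algebra_simps)
  also have "\<dots> \<le> (p*q*h) * ((p*q) * (a * b))"
    using pq assms(3) by (intro mult_left_mono_neg) auto
  also have "\<dots> = a * h * b"
    using pq2 by (simp add: algebra_simps)
  finally show ?thesis .
qed

lemma signed_abs_quadratic_form_le:
  assumes "signed_nonpos_off_diag p M"
  shows "(\<chi> i. p i * \<bar>x$i\<bar>) \<bullet> (M *v (\<chi> i. p i * \<bar>x$i\<bar>)) \<le> (x::real^'n) \<bullet> (M *v x)"
proof -
  have p: "p i = 1 \<or> p i = -1" for i
    using assms by (simp add: signed_nonpos_off_diag_def)
  have "p i * \<bar>x$i\<bar> * M$i$j * (p j * \<bar>x$j\<bar>) \<le> x$i * M$i$j * x$j" for i j
  proof (cases "i = j")
    case True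
    have "p i * p i = 1" using p[of i] by auto
    moreover have "\<bar>x$i\<bar> * \<bar>x$i\<bar> = x$i * x$i" by (rule abs_mult_self_eq)
    ultimately have "p i * \<bar>x$i\<bar> * M$i$i * (p i * \<bar>x$i\<bar>) = x$i * M$i$i * x$i"
      by (metis (no_types, lifting) mult.assoc mult.commute mult_1)
    then show ?thesis using True by (simp only: order_refl)
  next
    case False
    then show ?thesis
      using signed_abs_mult_le[OF p p] assms by (simp add: signed_nonpos_off_diag_def)
  qed
  then show ?thesis
    unfolding inner_matrix_vector_mult_eq_sum by (simp add: sum_mono)
qed

lemma signed_abs_in_kernel:
  assumes "psd_mat M" "signed_nonpos_off_diag p M" "M *v x = 0"
  shows "M *v (\<chi> i. p i * \<bar>x$i\<bar>) = 0"
proof (rule psd_mat_quadratic_form_eq_0_imp_kernel[OF assms(1)])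
  let ?y = "\<chi> i. p i * \<bar>x$i\<bar>"
  have "?y \<bullet> (M *v ?y) \<le> x \<bullet> (M *v x)" by (rule signed_abs_quadratic_form_le[OF assms(2)])
  then have "?y \<bullet> (M *v ?y) \<le> 0" using assms(3) by simp
  moreover have "0 \<le> ?y \<bullet> (M *v ?y)" using assms(1) by (simp add: psd_mat_def)
  ultimately show "?y \<bullet> (M *v ?y) = 0" by simp
qed

lemma signed_abs_kernel_row_entry_eq_0:
  assumes signed: "signed_nonpos_off_diag p M"
    and kernel: "M *v (\<chi> l. p l * \<bar>x$l\<bar>) = 0" and "x$i = 0"
  shows "M$i$j * x$j = 0"
proof -
  define t where "t l = - (p i * M$i$l * (p l * \<bar>x$l\<bar>))" for l
  have p: "p l = 1 \<or> p l = -1" for l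
    using signed by (simp add: signed_nonpos_off_diag_def)
  \<comment> \<open>p_i times row i of the kernel equation: a vanishing sum of nonpositive terms\<close>
  have "(\<Sum>l\<in>UNIV. t l) = - p i * (M *v (\<chi> l. p l * \<bar>x$l\<bar>)) $ i"
    by (simp add: t_def matrix_vector_mult_def sum_negf sum_distrib_left mult.assoc)
  then have "(\<Sum>l\<in>UNIV. t l) = 0" using kernel by simp
  moreover have "0 \<le> t l" for l
  proof (cases "l = i")
    case True then show ?thesis using \<open>x$i = 0\<close> by (simp add: t_def)
  next
    case False
    then have "p i * p l * M$i$l * \<bar>x$l\<bar> \<le> 0"
      using signed by (simp add: signed_nonpos_off_diag_def mult_nonpos_nonneg)
    then show ?thesis by (simp add: t_def algebra_simps)
  qed
  ultimately have "t j = 0" by (simp add: sum_nonneg_eq_0_iff)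
  moreover have "p i \<noteq> 0" "p j \<noteq> 0" using p by (metis zero_neq_one zero_neq_neg_one)+
  ultimately show ?thesis by (auto simp: t_def)
qed

lemma psd_irreducible_kernel_vector_nonzero_entry:
  fixes M :: "real^'n^'n"
  assumes psd: "psd_mat M" and irr: "irreducible_mat M" and signed: "signed_nonpos_off_diag p M"
    and kernel: "M *v x = 0" and "x \<noteq> 0"
  shows "x$k \<noteq> 0"
proof
  assume "x$k = 0"
  define I where "I = {i. x$i = 0}"
  have "I \<noteq> {}" using \<open>x$k = 0\<close> by (auto simp: I_def)
  moreover have "I \<noteq> UNIV" using \<open>x \<noteq> 0\<close> by (auto simp: I_def vec_eq_iff)
  moreover have "M$i$j = 0 \<and> M$j$i = 0" if "i \<in> I" "j \<notin> I" for i j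
  proof -
    have "M$i$j = 0"
      using signed_abs_kernel_row_entry_eq_0[OF signed signed_abs_in_kernel[OF psd signed kernel]]
        that by (force simp: I_def)
    moreover have "M$j$i = M$i$j"
      using psd by (simp add: psd_mat_def symmetric_mat_entry_swap)
    ultimately show ?thesis by simp
  qed
  ultimately show False using irr unfolding irreducible_mat_def by blast
qed

lemma rank_ge_if_kernel_subset_line:
  fixes A :: "real^'n^'m"
  assumes "v \<noteq> 0" and line: "\<And>w. A *v w = 0 \<Longrightarrow> \<exists>c. w = c *\<^sub>R v"
  shows "CARD('n) - 1 \<le> rank A"
proof -
  define V where "V = {x::real^'n. v \<bullet> x = 0}"
  have "span V = V" unfolding V_def by (simp add: subspace_hyperplane)
  have "inj_on ((*v) A) (span V)"
    unfolding \<open>span V = V\<close>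
  proof (rule inj_onI)
    fix a b assume "a \<in> V" "b \<in> V" "A *v a = A *v b"
    then have "A *v (a - b) = 0" by (simp add: matrix_vector_mult_diff_distrib)
    then obtain c where c: "a - b = c *\<^sub>R v" using line by blast
    have "0 = v \<bullet> (a - b)" using \<open>a \<in> V\<close> \<open>b \<in> V\<close> by (simp add: V_def inner_diff_right)
    also have "\<dots> = c * (v \<bullet> v)" using c by simp
    finally have "c = 0" using \<open>v \<noteq> 0\<close> by simp
    then show "a = b" using c by simp
  qed
  then have "dim ((*v) A ` V) = dim V"
    by (rule dim_image_eq[OF matrix_vector_mul_linear])
  also have "dim V = CARD('n) - 1"
    unfolding V_def using dim_hyperplane[OF \<open>v \<noteq> 0\<close>] by (simp add: DIM_cart)
  finally have "CARD('n) - 1 = dim ((*v) A ` V)" by simp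
  also have "\<dots> \<le> dim (range ((*v) A))" by (rule dim_subset) auto
  also have "\<dots> = rank A" by (simp add: rank_dim_range)
  finally show ?thesis .
qed

lemma psd_irreducible_signed_rank_ge:
  fixes M :: "real^'n^'n"
  assumes psd: "psd_mat M" and irr: "irreducible_mat M" and signed: "signed_nonpos_off_diag p M"
  shows "CARD('n) - 1 \<le> rank M"
proof (cases "\<exists>v. v \<noteq> 0 \<and> M *v v = 0")
  case False
  then have "rank M = CARD('n)" using matrix_nonfull_linear_equations_eq by blast
  then show ?thesis by simp
next
  case True
  then obtain v where "v \<noteq> 0" "M *v v = 0" by blast
  note nonzero_entry = psd_irreducible_kernel_vector_nonzero_entry[OF psd irr signed]
  fix k :: 'n
  have "v$k \<noteq> 0" using nonzero_entry[OF \<open>M *v v = 0\<close> \<open>v \<noteq> 0\<close>] .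
  show ?thesis
  proof (rule rank_ge_if_kernel_subset_line[OF \<open>v \<noteq> 0\<close>])
    fix w assume "M *v w = 0"
    \<comment> \<open>z is a kernel vector with a zero entry, hence zero\<close>
    define z where "z = w - (w$k / v$k) *\<^sub>R v"
    have "M *v z = 0" using \<open>M *v w = 0\<close> \<open>M *v v = 0\<close>
      by (simp add: z_def matrix_vector_mult_diff_distrib matrix_vector_mult_scaleR)
    moreover have "z$k = 0" using \<open>v$k \<noteq> 0\<close> by (simp add: z_def)
    ultimately have "z = 0" using nonzero_entry by blast
    then show "\<exists>c. w = c *\<^sub>R v" by (auto simp: z_def)
  qed
qed

lemma mat_vector_mult: "mat t *v x = t *\<^sub>R (x::real^'n)"
proof -
  have "(\<Sum>j\<in>UNIV. (if i = j then t else 0) * x$j) = (\<Sum>j\<in>UNIV. if i = j then t * x$j else 0)"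
    for i :: 'n by (rule sum.cong) auto
  then show ?thesis by (simp add: vec_eq_iff matrix_vector_mult_def mat_def)
qed

lemma quadratic_form_attains_min_on_sphere:
  fixes M :: "real^'n^'n"
  obtains v where "norm v = 1" "\<And>w. norm w = 1 \<Longrightarrow> v \<bullet> (M *v v) \<le> w \<bullet> (M *v w)"
proof -
  have "\<exists>v\<in>sphere (0::real^'n) 1. \<forall>w\<in>sphere 0 1. v \<bullet> (M *v v) \<le> w \<bullet> (M *v w)"
  proof (rule continuous_attains_inf)
    have "axis undefined 1 \<in> sphere (0::real^'n) 1" by (simp add: norm_axis_1)
    then show "sphere (0::real^'n) 1 \<noteq> {}" by blast
    show "continuous_on (sphere 0 1) (\<lambda>v::real^'n. v \<bullet> (M *v v))"
      by (intro continuous_intros matrix_vector_mult_linear_continuous_on)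
  qed auto
  then show ?thesis using that by auto
qed

lemma symmetric_mat_shift_singular_psd:
  fixes S :: "real^'n^'n"
  assumes "symmetric_mat S"
  obtains t where "psd_mat (S - mat t)" "rank (S - mat t) \<le> CARD('n) - 1"
proof -
  obtain v :: "real^'n" where "norm v = 1" and v_min: "\<And>w. norm w = 1 \<Longrightarrow> v \<bullet> (S *v v) \<le> w \<bullet> (S *v w)"
    using quadratic_form_attains_min_on_sphere[of S] by blast
  define t where "t = v \<bullet> (S *v v)"
  define H where "H = S - mat t"
  have form_H: "x \<bullet> (H *v x) = x \<bullet> (S *v x) - t * (x \<bullet> x)" for x
    by (simp add: H_def matrix_vector_mult_diff_rdistrib mat_vector_mult inner_diff_right)
  have "0 \<le> x \<bullet> (H *v x)" for x
  proof (cases "x = 0")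
    case False
    define u where "u = (1 / norm x) *\<^sub>R x"
    have "norm u = 1" using False by (simp add: u_def)
    then have "t \<le> u \<bullet> (S *v u)" using v_min t_def by blast
    also have "u \<bullet> (S *v u) = (x \<bullet> (S *v x)) / (norm x)\<^sup>2"
      by (simp add: u_def matrix_vector_mult_scaleR power2_eq_square)
    finally have "t * (norm x)\<^sup>2 \<le> x \<bullet> (S *v x)" using False by (simp add: field_simps)
    then show ?thesis by (simp add: form_H power2_norm_eq_inner)
  qed simp
  moreover have "symmetric_mat H" using assms
    by (simp add: H_def symmetric_mat_def vec_eq_iff transpose_def mat_def)
  ultimately have psd_H: "psd_mat H" by (simp add: psd_mat_def)
  have "v \<bullet> (H *v v) = 0"
    using \<open>norm v = 1\<close> by (simp add: form_H t_def flip: power2_norm_eq_inner)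
  then have "H *v v = 0" by (rule psd_mat_quadratic_form_eq_0_imp_kernel[OF psd_H])
  moreover have "v \<noteq> 0" using \<open>norm v = 1\<close> by auto
  ultimately have "rank H \<noteq> CARD('n)" using matrix_nonfull_linear_equations_eq by blast
  moreover have "rank H \<le> CARD('n)" using rank_bound[of H] by simp
  ultimately have "rank H \<le> CARD('n) - 1" by simp
  then show ?thesis using psd_H that unfolding H_def by blast
qed

theorem corollary2:
  fixes S :: "real^'n^'n"
  assumes "psd_mat S"
    and "irreducible_mat S"
    and "sign_nonpos_off_diag S"
  shows "mr S = CARD('n) - 1"
proof -
  obtain p where signed: "signed_nonpos_off_diag p S"
    using sign_nonpos_off_diag_imp_signed[OF assms(3)] .
  have lower: "CARD('n) - 1 \<le> rank H" if "S = D + H" "psd_mat H" "diagonal_mat D" for D H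
  proof (rule psd_irreducible_signed_rank_ge[OF \<open>psd_mat H\<close>])
    show "irreducible_mat H"
      using irreducible_mat_diagonal_add[of D H] assms(2) that by simp
    show "signed_nonpos_off_diag p H"
      using signed_nonpos_off_diag_diagonal_add[of p D H] signed that by simp
  qed
  have "symmetric_mat S" using assms(1) by (simp add: psd_mat_def)
  then obtain t where psd: "psd_mat (S - mat t)" and rank: "rank (S - mat t) \<le> CARD('n) - 1"
    by (rule symmetric_mat_shift_singular_psd)
  have diag: "diagonal_mat (mat t :: real^'n^'n)" by (simp add: diagonal_mat_def mat_def)
  show ?thesis unfolding mr_def
  proof (rule Least_equality)
    have "CARD('n) - 1 = rank (S - mat t)" using lower[of "mat t" "S - mat t"] psd diag rank by simp
    then show "\<exists>D H. S = D + H \<and> psd_mat H \<and> diagonal_mat D \<and> CARD('n) - 1 = rank H"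
      using psd diag by (intro exI[of _ "mat t"] exI[of _ "S - mat t"]) simp
  next
    fix r assume "\<exists>D H. S = D + H \<and> psd_mat H \<and> diagonal_mat D \<and> r = rank H"
    then show "CARD('n) - 1 \<le> r" using lower by auto
  qed
qed

end
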